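(* Let $S^{(1)}_{\rm tr},S^{(1)}_1,\dots,S^{(1)}_m$ be the output of Algorithm 1 and $S^{(2)}_{\rm tr},S^{(2)}_1,\dots,S^{(2)}_m$ the output of Algorithm 2 (both defined in the context). If every $f_i$ is monotone and submodular, then $$\max\Bigl\{\sum_{i=1}^m f_i\bigl(S^{(1)}_{\rm tr}\cup S^{(1)}_i\bigr),\;\sum_{i=1}^m f_i\bigl(S^{(2)}_{\rm tr}\cup S^{(2)}_i\bigr)\Bigr\}\;\ge\;0.53\cdot\mathrm{OPT}.$$ (That is, the Meta-Greedy algorithm, which runs Algorithms 1 and 2 and returns the solution with larger objective $\sum_i f_i(S_{\rm tr}\cup S_i)$, is $0.53$-approximate.)
   Context: $V$ is a finite ground set with $|V|=n$; $k,l$ are integers with $1\le l<k\le n$. For $i=1,\dots,m$, $f_i:2^V\to\mathbb{R}_{\ge 0}$ is a set function; $f_i$ is monotone if $A\subseteq B\Rightarrow f_i(A)\le f_i(B)$ and submodular if $f_i(A)+f_i(B)\ge f_i(A\cup B)+f_i(A\cap B)$ for all $A,B\subseteq V$. Write $\Delta_i(e\mid S)=f_i(S\cup\{e\})-f_i(S)$. Define $$\mathrm{OPT}=\max_{S_{\rm tr}\subseteq V,\,|S_{\rm tr}|\le l}\;\sum_{i=1}^m\;\max_{S_i\subseteq V,\,|S_i|\le k-l} f_i(S_{\rm tr}\cup S_i).$$ Algorithm 1: start with $S_{\rm tr}=S_1=\dots=S_m=\emptyset$. Phase 1: for $t=1,\dots,l$, choose $e^*\in\arg\max_{e\in V\setminus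 S_{\rm tr}}\sum_{i=1}^m\Delta_i(e\mid S_{\rm tr})$ and set $S_{\rm tr}\leftarrow S_{\rm tr}\cup\{e^*\}$. Phase 2: for $t=1,\dots,k-l$ and each $i$, choose $e_i^*\in\arg\max_{e\in V\setminus(S_{\rm tr}\cup S_i)}\Delta_i(e\mid S_{\rm tr}\cup S_i)$ and set $S_i\leftarrow S_i\cup\{e_i^*\}$. Algorithm 2: start with $S_{\rm tr}=S_1=\dots=S_m=\emptyset$. Phase 1: for each $i$ and $t=1,\dots,k-l$, choose $e_i^*\in\arg\max_{e\in V\setminus S_i}\Delta_i(e\mid S_i)$ and set $S_i\leftarrow S_i\cup\{e_i^*\}$. Phase 2: for $t=1,\dots,l$, choose $e^*\in\arg\max_{e\in V\setminus S_{\rm tr}}\sum_{i=1}^m\Delta_i(e\mid S_{\rm tr}\cup S_i)$ and set $S_{\rm tr}\leftarrow S_{\rm tr}\cup\{e^*\}$. Ties in all argmax's are broken arbitrarily. *)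

theory Defs
  imports Complex_Main
begin

definition gain :: "('a set \<Rightarrow> real) \<Rightarrow> 'a \<Rightarrow> 'a set \<Rightarrow> real" where
  "gain g e S = g (S \<union> {e}) - g S"

definition monotone_on_subsets :: "'a set \<Rightarrow> ('a set \<Rightarrow> real) \<Rightarrow> bool" where
  "monotone_on_subsets V g \<longleftrightarrow> (\<forall>A B. A \<subseteq> B \<and> B \<subseteq> V \<longrightarrow> g A \<le> g B)"

definition submodular_on_subsets :: "'a set \<Rightarrow> ('a set \<Rightarrow> real) \<Rightarrow> bool" where
  "submodular_on_subsets V g \<longleftrightarrow>
     (\<forall>A B. A \<subseteq> V \<and> B \<subseteq> V \<longrightarrow> g A + g B \<ge> g (A \<union> B) + g (A \<inter> B))"

text \<open>A generic greedy run with arbitrary tie breaking: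
  \<open>greedy_run V B w t S\<close> means that starting from the empty set and performing
  \<open>t\<close> steps, each adding an element \<open>e \<in> V - (B \<union> S)\<close> maximising the score
  \<open>w S e\<close> over all such candidates, one can arrive at \<open>S\<close>.\<close>
inductive greedy_run :: "'a set \<Rightarrow> 'a set \<Rightarrow> ('a set \<Rightarrow> 'a \<Rightarrow> real) \<Rightarrow> nat \<Rightarrow> 'a set \<Rightarrow> bool"
  for V B w where
  start: "greedy_run V B w 0 {}"
| step: "greedy_run V B w t S \<Longrightarrow> e \<in> V - (B \<union> S) \<Longrightarrow>
         (\<forall>e' \<in> V - (B \<union> S). w S e' \<le> w S e) \<Longrightarrow>
         greedy_run V B w (Suc t) (insert e S)"

definition alg1_output ::
  "'a set \<Rightarrow> nat \<Rightarrow> nat \<Rightarrow> nat \<Rightarrow> (nat \<Rightarrow> 'a set \<Rightarrow> real) \<Rightarrow> 'a set \<Rightarrow> (nat \<Rightarrow> 'a set) \<Rightarrow> bool" where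
  "alg1_output V k l m f Str Ss \<longleftrightarrow>
     greedy_run V {} (\<lambda>S e. \<Sum>i\<in>{1..m}. gain (f i) e S) l Str \<and>
     (\<forall>i\<in>{1..m}. greedy_run V Str (\<lambda>S e. gain (f i) e (Str \<union> S)) (k - l) (Ss i))"

definition alg2_output ::
  "'a set \<Rightarrow> nat \<Rightarrow> nat \<Rightarrow> nat \<Rightarrow> (nat \<Rightarrow> 'a set \<Rightarrow> real) \<Rightarrow> 'a set \<Rightarrow> (nat \<Rightarrow> 'a set) \<Rightarrow> bool" where
  "alg2_output V k l m f Str Ss \<longleftrightarrow>
     (\<forall>i\<in>{1..m}. greedy_run V {} (\<lambda>S e. gain (f i) e S) (k - l) (Ss i)) \<and>
     greedy_run V {} (\<lambda>S e. \<Sum>i\<in>{1..m}. gain (f i) e (S \<union> Ss i)) l Str"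

definition opt ::
  "'a set \<Rightarrow> nat \<Rightarrow> nat \<Rightarrow> nat \<Rightarrow> (nat \<Rightarrow> 'a set \<Rightarrow> real) \<Rightarrow> real" where
  "opt V k l m f =
     Max ((\<lambda>T. \<Sum>i\<in>{1..m}. Max ((\<lambda>S. f i (T \<union> S)) ` {S. S \<subseteq> V \<and> card S \<le> k - l}))
          ` {T. T \<subseteq> V \<and> card T \<le> l})"

end

theory Submission
  imports Defs
begin

text \<open>
  Both algorithms are analysed through one greedy inequality. If a greedy run of \<open>t\<close> steps
  maximises the marginal gain of a monotone submodular \<open>G\<close>, then for every set \<open>C\<close> with
  \<open>|C| \<le> n\<close>, every superset \<open>Y\<close> of the run's output \<open>S\<close> and every \<open>\<tau> \<in> [0, t/n]\<close>,
  \<open>G S - G {} \<ge> (G C - G {}) (1 - e\<^sup>-\<^sup>\<tau>) + (t/n - \<tau>) (G (Y \<union> C) - G Y)\<close>: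
  each step gains at least \<open>1/n\<close> of both the distance to \<open>G C\<close> and of what \<open>C\<close> still adds to
  \<open>Y\<close>, and interpolating between the two one-step bounds gives the exponential.
  Applied to the four greedy phases, with \<open>C\<close> taken from an optimal solution
  \<open>T\<^sup>*, S\<^sub>i\<^sup>*\<close>, and combined with three consequences of submodularity, this yields linear
  constraints between a dozen sums of values which force one of the two outputs to reach
  \<open>0.53 OPT\<close>.
\<close>

lemma greedy_run_subset:
  assumes "greedy_run V B w t S"
  shows "S \<subseteq> V - B"
  using assms by (induction rule: greedy_run.induct) auto

lemma greedy_run_card:
  assumes "greedy_run V B w t S"
  shows "card S = t"
proof -
  have "finite S \<and> card S = t"
    using assms by (induction rule: greedy_run.induct) auto
  then show ?thesis by simp
qed

lemma exp_bound_step: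
  fixes n s P D y y' \<tau> :: real
  assumes n: "1 \<le> n" and s: "0 \<le> s" and P: "0 \<le> P"
    and IH: "\<And>\<sigma>. 0 \<le> \<sigma> \<Longrightarrow> \<sigma> \<le> s \<Longrightarrow> P * (1 - exp (-\<sigma>)) + (s - \<sigma>) * D \<le> y"
    and towards_P: "y + (P - y) / n \<le> y'" and towards_D: "y + D / n \<le> y'"
    and \<tau>: "0 \<le> \<tau>" "\<tau> \<le> s + 1 / n"
  shows "P * (1 - exp (-\<tau>)) + (s + 1 / n - \<tau>) * D \<le> y'"
proof (cases "\<tau> \<le> s")
  case True
  then show ?thesis using IH[OF \<tau>(1) True] towards_D by (simp add: algebra_simps)
next
  case False
  define w where "w = \<tau> - s"
  have w0: "0 \<le> w" and w_n: "w \<le> 1 / n"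
    using False \<tau>(2) by (auto simp: w_def)
  have w: "0 \<le> n * w" "n * w \<le> 1"
    using w0 w_n n by (auto simp: field_simps)
  have "1 / n \<le> 1" using n by simp
  with w_n have w_le_1: "w \<le> 1" by linarith
  \<comment> \<open>\<open>y'\<close> dominates the convex combination of the two one-step bounds with weights \<open>n w\<close> and \<open>1 - n w\<close>\<close>
  have "n * w * (y + (P - y) / n) + (1 - n * w) * (y + D / n) \<le> n * w * y' + (1 - n * w) * y'"
    using mult_left_mono[OF towards_P w(1)] mult_left_mono[OF towards_D, of "1 - n * w"] w(2)
    by linarith
  moreover have "n * w * (y + (P - y) / n) + (1 - n * w) * (y + D / n)
                   = y + w * (P - y) + (1 / n - w) * D"
    using n by (simp add: field_simps)
  ultimately have convex: "y + w * (P - y) + (1 / n - w) * D \<le> y'"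
    by (simp add: algebra_simps)
  have "(1 - w) * (P * (1 - exp (-s))) \<le> (1 - w) * y"
    using IH[OF s order_refl] w_le_1 by (intro mult_left_mono) auto
  moreover have "exp (-s) * (1 - w) \<le> exp (-s) * exp (-w)"
    using exp_ge_add_one_self[of "-w"] by (intro mult_left_mono) auto
  then have "P * (exp (-s) * (1 - w)) \<le> P * exp (-\<tau>)"
    using P by (intro mult_left_mono) (auto simp: w_def simp flip: exp_add)
  ultimately have "P * (1 - exp (-\<tau>)) \<le> y + w * (P - y)"
    by (simp add: algebra_simps)
  moreover have "(s + 1 / n - \<tau>) * D = (1 / n - w) * D" by (simp add: w_def)
  ultimately show ?thesis using convex by linarith
qed

lemma exp_ge_taylor_sum:
  fixes x :: real
  assumes "0 \<le> x"
  shows "(\<Sum>j<N. x ^ j / fact j) \<le> exp x"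
proof -
  have "(\<Sum>j<N. x ^ j /\<^sub>R fact j) \<le> (\<Sum>j. x ^ j /\<^sub>R fact j)"
    using assms by (intro sum_le_suminf summable_exp_generic) auto
  then show ?thesis by (simp add: exp_def divide_inverse mult.commute)
qed

lemma one_minus_exp_neg_1_ge: "0.632 \<le> 1 - exp (-1::real)"
proof -
  have "(\<Sum>j<7. (1::real) ^ j / fact j) \<le> exp 1" by (rule exp_ge_taylor_sum) simp
  then have "2.718 \<le> exp (1::real)" by (simp add: numeral_eq_Suc fact_numeral)
  then show ?thesis by (simp add: exp_minus field_simps)
qed

lemma one_minus_exp_neg_015_ge: "0.139 \<le> 1 - exp (-0.15::real)"
proof -
  have "(\<Sum>j<4. (0.15::real) ^ j / fact j) \<le> exp 0.15" by (rule exp_ge_taylor_sum) simp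
  then have "1.1618 \<le> exp (0.15::real)" by (simp add: numeral_eq_Suc fact_numeral)
  then show ?thesis by (simp add: exp_minus field_simps)
qed

lemma one_minus_exp_neg_025_ge: "0.221 \<le> 1 - exp (-0.25::real)"
proof -
  have "(\<Sum>j<5. (0.25::real) ^ j / fact j) \<le> exp 0.25" by (rule exp_ge_taylor_sum) simp
  then have "1.2837 \<le> exp (0.25::real)" by (simp add: numeral_eq_Suc fact_numeral)
  then show ?thesis by (simp add: exp_minus field_simps)
qed

locale monotone_submodular =
  fixes V :: "'a set" and G :: "'a set \<Rightarrow> real"
  assumes monotone: "monotone_on_subsets V G"
    and submodular: "submodular_on_subsets V G"
begin

lemma mono: "A \<subseteq> B \<Longrightarrow> B \<subseteq> V \<Longrightarrow> G A \<le> G B"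
  using monotone unfolding monotone_on_subsets_def by blast

lemma submod: "A \<subseteq> V \<Longrightarrow> B \<subseteq> V \<Longrightarrow> G (A \<union> B) + G (A \<inter> B) \<le> G A + G B"
  using submodular unfolding submodular_on_subsets_def by blast

lemma gain_nonneg: "S \<subseteq> V \<Longrightarrow> e \<in> V \<Longrightarrow> 0 \<le> gain G e S"
  using mono[of S "insert e S"] by (auto simp: gain_def)

lemma marginal_antimono:
  assumes "X \<subseteq> Y" "Y \<subseteq> V" "Z \<subseteq> V"
  shows "G (Y \<union> Z) - G Y \<le> G (X \<union> Z) - G X"
proof -
  have "(X \<union> Z) \<union> Y = Y \<union> Z" using assms(1) by blast
  then have "G (Y \<union> Z) + G ((X \<union> Z) \<inter> Y) \<le> G (X \<union> Z) + G Y"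
    using submod[of "X \<union> Z" Y] assms by auto
  moreover have "G X \<le> G ((X \<union> Z) \<inter> Y)" using assms by (intro mono) auto
  ultimately show ?thesis by linarith
qed

lemma marginal_le_sum_gain:
  assumes "finite C" "S \<subseteq> V" "C \<subseteq> V"
  shows "G (S \<union> C) - G S \<le> (\<Sum>c\<in>C. gain G c S)"
  using assms(1,3)
proof (induction C rule: finite_induct)
  case empty
  then show ?case by simp
next
  case (insert c C)
  have "G (S \<union> insert c C) - G (S \<union> C) = G ((S \<union> C) \<union> {c}) - G (S \<union> C)"
    by (simp add: insert_commute)
  also have "\<dots> \<le> gain G c S"
    unfolding gain_def using insert.prems assms(2) by (intro marginal_antimono) auto
  finally show ?case using insert by simp
qed

lemma union_le_union_add_marginal:
  assumes "X \<subseteq> V" "T \<subseteq> V" "S \<subseteq> V"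
  shows "G (T \<union> S) \<le> G (X \<union> T) + (G (X \<union> S) - G X)"
proof -
  have "G (T \<union> S) \<le> G ((X \<union> T) \<union> S)" using assms by (intro mono) auto
  moreover have "G ((X \<union> T) \<union> S) - G (X \<union> T) \<le> G (X \<union> S) - G X"
    using assms by (intro marginal_antimono) auto
  ultimately show ?thesis by linarith
qed

lemma subadditive:
  assumes "0 \<le> G {}" "T \<subseteq> V" "S \<subseteq> V"
  shows "G (T \<union> S) \<le> G T + G S"
proof -
  have "G {} \<le> G (T \<inter> S)" using assms by (intro mono) auto
  then show ?thesis using submod[of T S] assms by linarith
qed

lemma greedy_choice_gain:
  assumes S: "S \<subseteq> V" and e: "e \<in> V - (B \<union> S)"
    and best: "\<forall>e'\<in>V - (B \<union> S). gain G e' S \<le> gain G e S"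
    and blocked: "\<And>c X. c \<in> B \<Longrightarrow> gain G c X = 0"
    and C: "finite C" "C \<subseteq> V" "card C \<le> n"
  shows "G (S \<union> C) - G S \<le> real n * gain G e S"
proof -
  have gain_e: "0 \<le> gain G e S" using S e by (intro gain_nonneg) auto
  have "gain G c S \<le> gain G e S" if "c \<in> C" for c
  proof -
    consider "c \<in> S" | "c \<in> B" | "c \<in> V - (B \<union> S)" using \<open>c \<in> C\<close> C(2) by auto
    then show ?thesis
      by cases (use gain_e best blocked in \<open>auto simp: gain_def insert_absorb\<close>)
  qed
  then have "(\<Sum>c\<in>C. gain G c S) \<le> (\<Sum>c\<in>C. gain G e S)"
    by (rule sum_mono)
  with marginal_le_sum_gain[OF C(1) S C(2)]
  have "G (S \<union> C) - G S \<le> (\<Sum>c\<in>C. gain G e S)" by linarith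
  also have "\<dots> \<le> real n * gain G e S"
    using C(3) gain_e by (simp add: mult_right_mono)
  finally show ?thesis .
qed

lemma greedy_lower_bound:
  assumes run: "greedy_run V B (\<lambda>S e. gain G e S) t S"
    and blocked: "\<And>c X. c \<in> B \<Longrightarrow> gain G c X = 0"
    and C: "finite C" "C \<subseteq> V" "card C \<le> n" and n: "1 \<le> n"
    and Y: "S \<subseteq> Y" "Y \<subseteq> V"
    and \<tau>: "0 \<le> \<tau>" "\<tau> \<le> real t / real n"
  shows "(G C - G {}) * (1 - exp (-\<tau>)) + (real t / real n - \<tau>) * (G (Y \<union> C) - G Y)
           \<le> G S - G {}"
  using run Y(1) \<tau>
proof (induction arbitrary: \<tau> rule: greedy_run.induct)
  case start
  then show ?case by simp
next
  case (step t S e)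
  have S: "S \<subseteq> V" using greedy_run_subset[OF step.hyps(1)] by blast
  have choice: "G (S \<union> C) - G S \<le> real n * gain G e S"
    using greedy_choice_gain[OF S step.hyps(2) _ blocked C] step.hyps(3) by simp
  have "G C \<le> G (S \<union> C)" using S C by (intro mono) auto
  with choice n have towards_C: "G C - G S \<le> real n * gain G e S" by linarith
  have "G (Y \<union> C) - G Y \<le> G (S \<union> C) - G S"
    using step.prems(1) Y(2) C(2) by (intro marginal_antimono) auto
  with choice have towards_Y: "G (Y \<union> C) - G Y \<le> real n * gain G e S" by linarith
  have insert_e: "G (insert e S) = G S + gain G e S" by (simp add: gain_def)
  have Suc_t: "real (Suc t) / real n = real t / real n + 1 / real n"
    by (simp add: add_divide_distrib)
  show ?case
    unfolding Suc_t
  proof (rule exp_bound_step[where s = "real t / real n" and y = "G S - G {}"])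
    show "1 \<le> real n" "0 \<le> real t / real n" "0 \<le> G C - G {}"
      using n C(2) mono[of "{}" C] by auto
    show "(G C - G {}) * (1 - exp (-\<sigma>)) + (real t / real n - \<sigma>) * (G (Y \<union> C) - G Y)
            \<le> G S - G {}" if "0 \<le> \<sigma>" "\<sigma> \<le> real t / real n" for \<sigma>
      using step.IH step.prems(1) that by blast
    show "G S - G {} + (G C - G {} - (G S - G {})) / real n \<le> G (insert e S) - G {}"
      "G S - G {} + (G (Y \<union> C) - G Y) / real n \<le> G (insert e S) - G {}"
      using towards_C towards_Y n by (simp_all add: insert_e divide_le_eq mult.commute)
    show "0 \<le> \<tau>" "\<tau> \<le> real t / real n + 1 / real n"
      using step.prems(2,3) Suc_t by simp_all
  qed
qed

lemma greedy_full_bound: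
  assumes run: "greedy_run V B (\<lambda>S e. gain G e S) n S"
    and blocked: "\<And>c X. c \<in> B \<Longrightarrow> gain G c X = 0"
    and C: "finite C" "C \<subseteq> V" "card C \<le> n" and n: "1 \<le> n"
    and \<tau>: "0 \<le> \<tau>" "\<tau> \<le> 1" and c: "c \<le> 1 - exp (-\<tau>)"
  shows "c * (G C - G {}) + (1 - \<tau>) * (G (S \<union> C) - G S) \<le> G S - G {}"
proof -
  have S: "S \<subseteq> V" using greedy_run_subset[OF run] by blast
  have "c * (G C - G {}) \<le> (1 - exp (-\<tau>)) * (G C - G {})"
    using c C(2) mono[of "{}" C] by (intro mult_right_mono) auto
  moreover have "(G C - G {}) * (1 - exp (-\<tau>)) + (1 - \<tau>) * (G (S \<union> C) - G S) \<le> G S - G {}"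
    using greedy_lower_bound[OF run blocked C n order_refl S \<tau>(1)] \<tau>(2) n by simp
  ultimately show ?thesis by (simp add: mult.commute)
qed

lemma greedy_ratio_bound:
  assumes run: "greedy_run V B (\<lambda>S e. gain G e S) n S"
    and blocked: "\<And>c X. c \<in> B \<Longrightarrow> gain G c X = 0"
    and C: "finite C" "C \<subseteq> V" "card C \<le> n" and n: "1 \<le> n"
    and c: "c \<le> 1 - exp (-1)"
  shows "c * (G C - G {}) \<le> G S - G {}"
  using greedy_full_bound[OF run blocked C n _ _ c] by simp

lemma greedy_full_bound_nonneg:
  assumes run: "greedy_run V B (\<lambda>S e. gain G e S) n S"
    and blocked: "\<And>c X. c \<in> B \<Longrightarrow> gain G c X = 0"
    and C: "finite C" "C \<subseteq> V" "card C \<le> n" and n: "1 \<le> n"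
    and \<tau>: "0 \<le> \<tau>" "\<tau> \<le> 1" and c: "c \<le> 1 - exp (-\<tau>)" and empty: "0 \<le> G {}"
  shows "c * G C + (1 - \<tau>) * (G (S \<union> C) - G S) \<le> G S"
proof -
  have "c \<le> 1" using c exp_gt_zero[of "-\<tau>"] by linarith
  then have "c * G {} \<le> G {}"
    using mult_right_mono[OF _ empty, of c 1] by simp
  with greedy_full_bound[OF assms(1-9)] show ?thesis by (simp add: algebra_simps)
qed

end

lemma monotone_submodular_sum:
  assumes "\<And>i. i \<in> I \<Longrightarrow> monotone_submodular V (f i)"
  shows "monotone_submodular V (\<lambda>S. \<Sum>i\<in>I. f i S)"
proof
  show "monotone_on_subsets V (\<lambda>S. \<Sum>i\<in>I. f i S)"
    unfolding monotone_on_subsets_def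
    by (blast intro: sum_mono monotone_submodular.mono[OF assms])
  have "(\<Sum>i\<in>I. f i (A \<union> B)) + (\<Sum>i\<in>I. f i (A \<inter> B)) \<le> (\<Sum>i\<in>I. f i A) + (\<Sum>i\<in>I. f i B)"
    if "A \<subseteq> V" "B \<subseteq> V" for A B
    using sum_mono[of I "\<lambda>i. f i (A \<union> B) + f i (A \<inter> B)" "\<lambda>i. f i A + f i B"]
      monotone_submodular.submod[OF assms that] by (simp add: sum.distrib)
  then show "submodular_on_subsets V (\<lambda>S. \<Sum>i\<in>I. f i S)"
    unfolding submodular_on_subsets_def by blast
qed

lemma monotone_submodular_shift:
  assumes "monotone_submodular V G" "X \<subseteq> V"
  shows "monotone_submodular V (\<lambda>S. G (X \<union> S))"
proof
  show "monotone_on_subsets V (\<lambda>S. G (X \<union> S))"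
    unfolding monotone_on_subsets_def
    using assms by (blast intro: monotone_submodular.mono)
  have "G (X \<union> (A \<union> B)) + G (X \<union> (A \<inter> B)) \<le> G (X \<union> A) + G (X \<union> B)"
    if "A \<subseteq> V" "B \<subseteq> V" for A B
    using monotone_submodular.submod[OF assms(1), of "X \<union> A" "X \<union> B"] that assms(2)
    by (simp add: Un_Int_distrib Un_left_commute Un_assoc sup.absorb_iff2 Un_absorb)
  then show "submodular_on_subsets V (\<lambda>S. G (X \<union> S))"
    unfolding submodular_on_subsets_def by blast
qed

lemma opt_attained:
  assumes "finite V"
  obtains T S where "T \<subseteq> V" "card T \<le> l" "\<forall>i\<in>{1..m}. S i \<subseteq> V \<and> card (S i) \<le> k - l"
    "opt V k l m f = (\<Sum>i\<in>{1..m}. f i (T \<union> S i))"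
proof -
  define \<T> where "\<T> = {T. T \<subseteq> V \<and> card T \<le> l}"
  define \<S> where "\<S> = {S. S \<subseteq> V \<and> card S \<le> k - l}"
  have "\<T> \<subseteq> Pow V" "\<S> \<subseteq> Pow V" "{} \<in> \<T>" "{} \<in> \<S>"
    by (auto simp: \<T>_def \<S>_def)
  then have fin: "finite \<T>" "finite \<S>" and ne: "\<T> \<noteq> {}" "\<S> \<noteq> {}"
    using assms finite_subset by blast+
  define best where "best T i = Max ((\<lambda>S. f i (T \<union> S)) ` \<S>)" for T i
  have "best T i \<in> (\<lambda>S. f i (T \<union> S)) ` \<S>" for T i
    unfolding best_def using fin ne by (intro Max_in) auto
  then have "\<exists>S. S \<in> \<S> \<and> best T i = f i (T \<union> S)" for T i by blast
  then obtain S where S: "\<And>T i. S T i \<in> \<S>" "\<And>T i. best T i = f i (T \<union> S T i)"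
    by metis
  have "opt V k l m f \<in> (\<lambda>T. \<Sum>i\<in>{1..m}. best T i) ` \<T>"
    unfolding opt_def \<T>_def[symmetric] \<S>_def[symmetric] best_def using fin ne by (intro Max_in) auto
  then obtain T where "T \<in> \<T>" "opt V k l m f = (\<Sum>i\<in>{1..m}. f i (T \<union> S T i))"
    using S(2) by auto
  moreover have "\<forall>i\<in>{1..m}. S T i \<subseteq> V \<and> card (S T i) \<le> k - l"
    using S(1) by (simp add: \<S>_def)
  ultimately show thesis using that unfolding \<T>_def by blast
qed

text \<open>
  With an optimal solution \<open>T, S\<^sub>i\<close> and the outputs \<open>Str\<^sub>1, S1\<^sub>i\<close> and \<open>Str\<^sub>2, S2\<^sub>i\<close>,
  the variables stand for the following sums over \<open>i\<close>:
  \<open>opt = \<Sum> f\<^sub>i (T \<union> S\<^sub>i)\<close>, \<open>p = \<Sum> f\<^sub>i T\<close>, \<open>q = \<Sum> f\<^sub>i S\<^sub>i\<close>,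
  \<open>a = \<Sum> f\<^sub>i Str\<^sub>1\<close>, \<open>b = \<Sum> f\<^sub>i (Str\<^sub>1 \<union> T)\<close>, \<open>z = \<Sum> f\<^sub>i (Str\<^sub>1 \<union> S\<^sub>i)\<close>,
  \<open>x = \<Sum> f\<^sub>i S2\<^sub>i\<close>, \<open>y = \<Sum> f\<^sub>i (S2\<^sub>i \<union> S\<^sub>i)\<close>, \<open>gt = \<Sum> f\<^sub>i (S2\<^sub>i \<union> T)\<close>,
  \<open>gs = \<Sum> f\<^sub>i (S2\<^sub>i \<union> Str\<^sub>1)\<close>, and \<open>a1\<close>, \<open>a2\<close> are the two objective values.
\<close>
lemma meta_greedy_ratio_from_constraints:
  fixes opt p q a b z x y gt gs a1 a2 :: real
  assumes "0 \<le> p" "p \<le> opt" "opt \<le> p + q" "opt \<le> b + (z - a)" "opt \<le> gt + (y - x)"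
    "y \<le> gs + (z - a)"
    and "a + 0.632 * (z - a) \<le> a1" "0.221 * p + (1 - 0.25) * (b - a) \<le> a"
    and "x + 0.632 * (gt - x) \<le> a2" "x + 0.632 * (gs - x) \<le> a2"
      "0.139 * q + (1 - 0.15) * (y - x) \<le> x" "0.221 * q + (1 - 0.25) * (y - x) \<le> x"
  shows "0.53 * opt \<le> max a1 a2"
proof (rule ccontr)
  assume "\<not> ?thesis"
  then have "a1 < 0.53 * opt" "a2 < 0.53 * opt" by auto
  then have "a + x + 0.632 * (y - x) < 1.06 * opt" using assms by (simp add: field_simps)
  moreover from \<open>a1 < 0.53 * opt\<close> have "a - 0.632 * b < - 0.102 * opt"
    using assms by (simp add: field_simps)
  moreover from \<open>a2 < 0.53 * opt\<close> have "0.368 * x - 0.632 * (y - x) < - 0.102 * opt"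
    using assms by (simp add: field_simps)
  ultimately show False using assms by (simp add: field_simps)
qed

locale submodular_tasks =
  fixes V :: "'a set" and m :: nat and f :: "nat \<Rightarrow> 'a set \<Rightarrow> real"
  assumes finite_V: "finite V"
    and nonneg: "\<And>i A. i \<in> {1..m} \<Longrightarrow> A \<subseteq> V \<Longrightarrow> 0 \<le> f i A"
    and monotone: "\<And>i. i \<in> {1..m} \<Longrightarrow> monotone_on_subsets V (f i)"
    and submodular: "\<And>i. i \<in> {1..m} \<Longrightarrow> submodular_on_subsets V (f i)"
begin

lemma task: "i \<in> {1..m} \<Longrightarrow> monotone_submodular V (f i)"
  using monotone submodular by unfold_locales

lemma sum_union_le_union_add_marginal:
  assumes "\<forall>i\<in>{1..m}. X i \<subseteq> V \<and> T i \<subseteq> V \<and> S i \<subseteq> V"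
  shows "(\<Sum>i\<in>{1..m}. f i (T i \<union> S i))
           \<le> (\<Sum>i\<in>{1..m}. f i (X i \<union> T i)) + ((\<Sum>i\<in>{1..m}. f i (X i \<union> S i)) - (\<Sum>i\<in>{1..m}. f i (X i)))"
proof -
  have "(\<Sum>i\<in>{1..m}. f i (T i \<union> S i)) \<le> (\<Sum>i\<in>{1..m}. f i (X i \<union> T i) + (f i (X i \<union> S i) - f i (X i)))"
    using assms by (intro sum_mono monotone_submodular.union_le_union_add_marginal[OF task]) auto
  then show ?thesis by (simp add: sum.distrib sum_subtractf)
qed

lemma sum_subadditive:
  assumes "T \<subseteq> V" "\<forall>i\<in>{1..m}. S i \<subseteq> V"
  shows "(\<Sum>i\<in>{1..m}. f i (T \<union> S i)) \<le> (\<Sum>i\<in>{1..m}. f i T) + (\<Sum>i\<in>{1..m}. f i (S i))"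
proof -
  have "(\<Sum>i\<in>{1..m}. f i (T \<union> S i)) \<le> (\<Sum>i\<in>{1..m}. f i T + f i (S i))"
    using assms nonneg by (intro sum_mono monotone_submodular.subadditive[OF task]) auto
  then show ?thesis by (simp add: sum.distrib)
qed

lemma alg1_phase1_bound:
  assumes alg: "alg1_output V k l m f Str S'" and l: "1 \<le> l"
    and T: "T \<subseteq> V" "card T \<le> l"
    and \<tau>: "0 \<le> \<tau>" "\<tau> \<le> 1" and c: "c \<le> 1 - exp (-\<tau>)"
  shows "c * (\<Sum>i\<in>{1..m}. f i T)
           + (1 - \<tau>) * ((\<Sum>i\<in>{1..m}. f i (Str \<union> T)) - (\<Sum>i\<in>{1..m}. f i Str))
         \<le> (\<Sum>i\<in>{1..m}. f i Str)"
proof -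
  interpret F: monotone_submodular V "\<lambda>S. \<Sum>i\<in>{1..m}. f i S"
    by (rule monotone_submodular_sum[OF task])
  have "(\<lambda>S e. \<Sum>i\<in>{1..m}. gain (f i) e S) = (\<lambda>S e. gain (\<lambda>S. \<Sum>i\<in>{1..m}. f i S) e S)"
    by (simp add: gain_def sum_subtractf)
  then have run: "greedy_run V {} (\<lambda>S e. gain (\<lambda>S. \<Sum>i\<in>{1..m}. f i S) e S) l Str"
    using alg by (simp add: alg1_output_def)
  show ?thesis
    using finite_subset[OF T(1) finite_V] nonneg
    by (intro F.greedy_full_bound_nonneg[OF run _ _ T l \<tau> c]) (auto intro: sum_nonneg)
qed

lemma alg1_phase2_bound:
  assumes alg: "alg1_output V k l m f Str S'" and "l < k"
    and S: "\<forall>i\<in>{1..m}. S i \<subseteq> V \<and> card (S i) \<le> k - l"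
    and c: "c \<le> 1 - exp (-1)"
  shows "(\<Sum>i\<in>{1..m}. f i Str) + c * ((\<Sum>i\<in>{1..m}. f i (Str \<union> S i)) - (\<Sum>i\<in>{1..m}. f i Str))
         \<le> (\<Sum>i\<in>{1..m}. f i (Str \<union> S' i))"
proof -
  have Str: "Str \<subseteq> V" using alg greedy_run_subset unfolding alg1_output_def by blast
  have "f i Str + c * (f i (Str \<union> S i) - f i Str) \<le> f i (Str \<union> S' i)"
    if i: "i \<in> {1..m}" for i
  proof -
    interpret G: monotone_submodular V "\<lambda>X. f i (Str \<union> X)"
      by (rule monotone_submodular_shift[OF task[OF i] Str])
    have "greedy_run V Str (\<lambda>S e. gain (f i) e (Str \<union> S)) (k - l) (S' i)"
      using alg i unfolding alg1_output_def by blast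
    moreover have "(\<lambda>S e. gain (f i) e (Str \<union> S)) = (\<lambda>S e. gain (\<lambda>X. f i (Str \<union> X)) e S)"
      by (simp add: gain_def Un_assoc)
    ultimately have run: "greedy_run V Str (\<lambda>S e. gain (\<lambda>X. f i (Str \<union> X)) e S) (k - l) (S' i)"
      by simp
    have blocked: "gain (\<lambda>X. f i (Str \<union> X)) x X = 0" if "x \<in> Str" for x X
      using that by (simp add: gain_def insert_absorb)
    have "c * (f i (Str \<union> S i) - f i (Str \<union> {})) \<le> f i (Str \<union> S' i) - f i (Str \<union> {})"
      using S i finite_subset[OF _ finite_V] assms(2)
      by (intro G.greedy_ratio_bound[OF run blocked _ _ _ _ c]) auto
    then show ?thesis by simp
  qed
  then have "(\<Sum>i\<in>{1..m}. f i Str + c * (f i (Str \<union> S i) - f i Str))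
               \<le> (\<Sum>i\<in>{1..m}. f i (Str \<union> S' i))"
    by (rule sum_mono)
  then show ?thesis by (simp add: sum.distrib flip: sum_distrib_left sum_subtractf)
qed

lemma alg2_phase1_bound:
  assumes alg: "alg2_output V k l m f Str S'" and "l < k"
    and S: "\<forall>i\<in>{1..m}. S i \<subseteq> V \<and> card (S i) \<le> k - l"
    and \<tau>: "0 \<le> \<tau>" "\<tau> \<le> 1" and c: "c \<le> 1 - exp (-\<tau>)"
  shows "c * (\<Sum>i\<in>{1..m}. f i (S i))
           + (1 - \<tau>) * ((\<Sum>i\<in>{1..m}. f i (S' i \<union> S i)) - (\<Sum>i\<in>{1..m}. f i (S' i)))
         \<le> (\<Sum>i\<in>{1..m}. f i (S' i))"
proof -
  have "c * f i (S i) + (1 - \<tau>) * (f i (S' i \<union> S i) - f i (S' i)) \<le> f i (S' i)"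
    if i: "i \<in> {1..m}" for i
  proof -
    interpret G: monotone_submodular V "f i" by (rule task[OF i])
    have run: "greedy_run V {} (\<lambda>S e. gain (f i) e S) (k - l) (S' i)"
      using alg i by (simp add: alg2_output_def)
    show ?thesis
      using S i nonneg[OF i] finite_subset[OF _ finite_V] assms(2)
      by (intro G.greedy_full_bound_nonneg[OF run _ _ _ _ _ \<tau> c]) auto
  qed
  then have "(\<Sum>i\<in>{1..m}. c * f i (S i) + (1 - \<tau>) * (f i (S' i \<union> S i) - f i (S' i)))
               \<le> (\<Sum>i\<in>{1..m}. f i (S' i))"
    by (rule sum_mono)
  then show ?thesis by (simp add: sum.distrib flip: sum_distrib_left sum_subtractf)
qed

lemma alg2_phase2_bound:
  assumes alg: "alg2_output V k l m f Str S'" and l: "1 \<le> l"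
    and C: "C \<subseteq> V" "card C \<le> l" and c: "c \<le> 1 - exp (-1)"
  shows "(\<Sum>i\<in>{1..m}. f i (S' i)) + c * ((\<Sum>i\<in>{1..m}. f i (S' i \<union> C)) - (\<Sum>i\<in>{1..m}. f i (S' i)))
         \<le> (\<Sum>i\<in>{1..m}. f i (Str \<union> S' i))"
proof -
  have S': "S' i \<subseteq> V" if "i \<in> {1..m}" for i
    using alg that greedy_run_subset unfolding alg2_output_def by blast
  interpret H: monotone_submodular V "\<lambda>T. \<Sum>i\<in>{1..m}. f i (S' i \<union> T)"
    by (rule monotone_submodular_sum[OF monotone_submodular_shift[OF task S']])
  have "(\<lambda>S e. \<Sum>i\<in>{1..m}. gain (f i) e (S \<union> S' i))
          = (\<lambda>S e. gain (\<lambda>T. \<Sum>i\<in>{1..m}. f i (S' i \<union> T)) e S)"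
    by (simp add: gain_def sum_subtractf Un_ac)
  then have run: "greedy_run V {} (\<lambda>S e. gain (\<lambda>T. \<Sum>i\<in>{1..m}. f i (S' i \<union> T)) e S) l Str"
    using alg by (simp add: alg2_output_def)
  have "c * ((\<Sum>i\<in>{1..m}. f i (S' i \<union> C)) - (\<Sum>i\<in>{1..m}. f i (S' i \<union> {})))
          \<le> (\<Sum>i\<in>{1..m}. f i (S' i \<union> Str)) - (\<Sum>i\<in>{1..m}. f i (S' i \<union> {}))"
    using finite_subset[OF C(1) finite_V] by (intro H.greedy_ratio_bound[OF run _ _ C l c]) auto
  then show ?thesis by (simp add: Un_commute)
qed

lemma meta_greedy_ratio:
  assumes alg1: "alg1_output V k l m f Str1 S1" and alg2: "alg2_output V k l m f Str2 S2"
    and l: "1 \<le> l" "l < k"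
    and T: "T \<subseteq> V" "card T \<le> l" and S: "\<forall>i\<in>{1..m}. S i \<subseteq> V \<and> card (S i) \<le> k - l"
  shows "0.53 * (\<Sum>i\<in>{1..m}. f i (T \<union> S i))
           \<le> max (\<Sum>i\<in>{1..m}. f i (Str1 \<union> S1 i)) (\<Sum>i\<in>{1..m}. f i (Str2 \<union> S2 i))"
proof -
  have run1: "greedy_run V {} (\<lambda>S e. \<Sum>i\<in>{1..m}. gain (f i) e S) l Str1"
    using alg1 by (simp add: alg1_output_def)
  have Str1: "Str1 \<subseteq> V" "card Str1 \<le> l"
    using greedy_run_subset[OF run1] greedy_run_card[OF run1] by auto
  have S2: "\<forall>i\<in>{1..m}. S2 i \<subseteq> V"
    using alg2 greedy_run_subset unfolding alg2_output_def by blast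
  have \<tau>: "(0::real) \<le> 0.15" "(0.15::real) \<le> 1" "(0::real) \<le> 0.25" "(0.25::real) \<le> 1"
    by simp_all
  have p: "0 \<le> (\<Sum>i\<in>{1..m}. f i T)" "(\<Sum>i\<in>{1..m}. f i T) \<le> (\<Sum>i\<in>{1..m}. f i (T \<union> S i))"
    using nonneg T(1) S by (auto intro!: sum_nonneg sum_mono monotone_submodular.mono[OF task])
  have sets: "\<forall>i\<in>{1..m}. Str1 \<subseteq> V \<and> T \<subseteq> V \<and> S i \<subseteq> V"
    "\<forall>i\<in>{1..m}. S2 i \<subseteq> V \<and> T \<subseteq> V \<and> S i \<subseteq> V"
    "\<forall>i\<in>{1..m}. Str1 \<subseteq> V \<and> S2 i \<subseteq> V \<and> S i \<subseteq> V"
    "\<forall>i\<in>{1..m}. S i \<subseteq> V"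
    using Str1 T S2 S by auto
  have "(\<Sum>i\<in>{1..m}. f i (S2 i \<union> S i)) \<le> (\<Sum>i\<in>{1..m}. f i (S2 i \<union> Str1))
          + ((\<Sum>i\<in>{1..m}. f i (Str1 \<union> S i)) - (\<Sum>i\<in>{1..m}. f i Str1))"
    using sum_union_le_union_add_marginal[of "\<lambda>_. Str1" S2 S, OF sets(3)]
    by (simp add: Un_commute)
  then show ?thesis
    by (rule meta_greedy_ratio_from_constraints[OF p
        sum_subadditive[OF T(1) sets(4)] sum_union_le_union_add_marginal[of "\<lambda>_. Str1" "\<lambda>_. T" S, OF sets(1)]
        sum_union_le_union_add_marginal[of S2 "\<lambda>_. T" S, OF sets(2)] _
        alg1_phase2_bound[OF alg1 l(2) S one_minus_exp_neg_1_ge]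
        alg1_phase1_bound[OF alg1 l(1) T \<tau>(3,4) one_minus_exp_neg_025_ge]
        alg2_phase2_bound[OF alg2 l(1) T one_minus_exp_neg_1_ge]
        alg2_phase2_bound[OF alg2 l(1) Str1 one_minus_exp_neg_1_ge]
        alg2_phase1_bound[OF alg2 l(2) S \<tau>(1,2) one_minus_exp_neg_015_ge]
        alg2_phase1_bound[OF alg2 l(2) S \<tau>(3,4) one_minus_exp_neg_025_ge]])
qed

end

theorem theorem1:
  fixes V :: "'a set" and k l m :: nat and f :: "nat \<Rightarrow> 'a set \<Rightarrow> real"
    and Str1 Str2 :: "'a set" and S1 S2 :: "nat \<Rightarrow> 'a set"
  assumes "finite V"
    and "1 \<le> l" and "l < k" and "k \<le> card V"
    and "\<And>i A. i \<in> {1..m} \<Longrightarrow> A \<subseteq> V \<Longrightarrow> f i A \<ge> 0"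
    and "\<And>i. i \<in> {1..m} \<Longrightarrow> monotone_on_subsets V (f i)"
    and "\<And>i. i \<in> {1..m} \<Longrightarrow> submodular_on_subsets V (f i)"
    and "alg1_output V k l m f Str1 S1"
    and "alg2_output V k l m f Str2 S2"
  shows "max (\<Sum>i\<in>{1..m}. f i (Str1 \<union> S1 i)) (\<Sum>i\<in>{1..m}. f i (Str2 \<union> S2 i))
           \<ge> 0.53 * opt V k l m f"
proof -
  interpret submodular_tasks V m f
    using assms(1,5-7) by unfold_locales
  obtain T S where T: "T \<subseteq> V" "card T \<le> l"
    and S: "\<forall>i\<in>{1..m}. S i \<subseteq> V \<and> card (S i) \<le> k - l"
    and opt: "opt V k l m f = (\<Sum>i\<in>{1..m}. f i (T \<union> S i))"
    by (rule opt_attained[OF assms(1)])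
  show ?thesis
    unfolding opt using meta_greedy_ratio[OF assms(8,9,2,3) T S] by simp
qed

end
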